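(* Let $p$ be a prime, let $R$ be a GWNC ring with $p\in{\rm Nil}(R)$, and let $G$ be a locally finite $p$-group. Then the group ring $RG$ is GWNC.
   Context: All rings are associative with identity. For a ring $S$, $U(S)$, ${\rm Nil}(S)$, ${\rm Id}(S)$ denote units, nilpotents, idempotents. $S$ is GWNC if every $a\in S\setminus U(S)$ can be written as $a=q+e$ or $a=q-e$ with $q\in{\rm Nil}(S)$, $e\in{\rm Id}(S)$. A group is a $p$-group if the order of each element is a power of $p$; it is locally finite if every finitely generated subgroup is finite. *)

theory Defs
  imports Main "HOL-Library.Poly_Mapping" "HOL-Computational_Algebra.Primes"
begin

definition is_unit_ring :: "'a::ring_1 \<Rightarrow> bool" where
  "is_unit_ring a \<longleftrightarrow> (\<exists>b. a * b = 1 \<and> b * a = 1)"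

definition is_nilpotent :: "'a::ring_1 \<Rightarrow> bool" where
  "is_nilpotent a \<longleftrightarrow> (\<exists>n::nat. a ^ n = 0)"

definition is_idempotent :: "'a::ring_1 \<Rightarrow> bool" where
  "is_idempotent e \<longleftrightarrow> e * e = e"

definition GWNC :: "'a::ring_1 itself \<Rightarrow> bool" where
  "GWNC _ \<longleftrightarrow> (\<forall>a::'a. \<not> is_unit_ring a \<longrightarrow>
      (\<exists>q e. is_nilpotent q \<and> is_idempotent e \<and> (a = q + e \<or> a = q - e)))"

section \<open>Groups (written additively: class group_add, not necessarily abelian)\<close>

definition gpow :: "'g::group_add \<Rightarrow> nat \<Rightarrow> 'g" where
  "gpow g n = (((+) g) ^^ n) 0"

definition elem_order :: "'g::group_add \<Rightarrow> nat" where
  "elem_order g = (if \<exists>n>0. gpow g n = 0 then (LEAST n. n > 0 \<and> gpow g n = 0) else 0)"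

definition p_group :: "nat \<Rightarrow> 'g::group_add itself \<Rightarrow> bool" where
  "p_group p _ \<longleftrightarrow> (\<forall>g::'g. \<exists>k::nat. elem_order g = p ^ k)"

inductive_set gen_subgroup :: "'g::group_add set \<Rightarrow> 'g set" for S where
  zero: "0 \<in> gen_subgroup S"
| gen: "s \<in> S \<Longrightarrow> s \<in> gen_subgroup S"
| add: "a \<in> gen_subgroup S \<Longrightarrow> b \<in> gen_subgroup S \<Longrightarrow> a + b \<in> gen_subgroup S"
| neg: "a \<in> gen_subgroup S \<Longrightarrow> - a \<in> gen_subgroup S"

definition locally_finite_group :: "'g::group_add itself \<Rightarrow> bool" where
  "locally_finite_group _ \<longleftrightarrow> (\<forall>S::'g set. finite S \<longrightarrow> finite (gen_subgroup S))"

text \<open>The group ring RG is the poly_mapping type from 'g to 'a of finitely supported functions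
  with convolution product (HOL-Library.Poly_Mapping).\<close>

end

theory Submission
  imports Defs "HOL-Algebra.Group_Action" "HOL-Algebra.Sylow" "HOL-Algebra.Multiplicative_Group"
begin

text \<open>
  Let \<open>a\<close> be a non-unit of \<open>RG\<close> and \<open>H\<close> the finite \<open>p\<close>-group generated by its support, so
  that \<open>a = \<epsilon>(a) + y\<close> with \<open>\<epsilon>\<close> the augmentation and \<open>y\<close> in the ideal \<open>J(H)\<close> of \<open>R[H]\<close> generated
  by \<open>p\<close> and all \<open>h - 1\<close>. This ideal is nil. Indeed, walking up a central series of \<open>H\<close>, let
  \<open>S' = \<langle>S, z\<rangle>\<close> where \<open>S\<close> is normal, \<open>z\<close> is central modulo \<open>S\<close> and \<open>z\<^sup>p \<in> S\<close>. Then \<open>z - 1\<close>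
  commutes with \<open>R[H]\<close> modulo \<open>J(S)\<close>, every element of \<open>J(S')\<close> is \<open>(z - 1) c\<close> modulo \<open>J(S)\<close>, and
  \<open>(z - 1)\<^sup>p \<equiv> z\<^sup>p - 1 \<equiv> 0\<close> modulo \<open>J(S)\<close>; so products of \<open>p\<close> elements of \<open>J(S')\<close> lie in
  \<open>J(S)\<close>. At the bottom \<open>J(0) = p R[H]\<close>, and \<open>p\<close> is nilpotent. Hence \<open>a\<close> is a unit if \<open>\<epsilon>(a)\<close> is,
  and otherwise \<open>\<epsilon>(a) = q \<plusminus> e\<close> in \<open>R\<close> yields \<open>a = (q + y) \<plusminus> e\<close> with \<open>q + y\<close> nilpotent.
\<close>

section \<open>Noncommutative rings\<close>

lemma binomial_add_1:
  fixes x :: "'a::semiring_1"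
  shows "(x + 1) ^ n = (\<Sum>k \<le> n. of_nat (n choose k) * x ^ k)"
proof (induction n)
  case (Suc n)
  have "x * (x + 1) ^ n = (\<Sum>k \<le> n. of_nat (n choose k) * x ^ Suc k)"
    unfolding Suc sum_distrib_left by (intro sum.cong refl) (metis mult.assoc mult_of_nat_commute power_Suc)
  moreover have "(\<Sum>k \<le> Suc n. of_nat (n choose k) * x ^ k) = (x + 1) ^ n"
    by (simp add: Suc binomial_eq_0)
  ultimately have "(x + 1) ^ Suc n
      = (\<Sum>k \<le> n. of_nat (n choose k) * x ^ Suc k) + (\<Sum>k \<le> Suc n. of_nat (n choose k) * x ^ k)"
    by (simp add: distrib_right)
  also have "\<dots> = (\<Sum>k \<le> Suc n. of_nat (Suc n choose k) * x ^ k)"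
    by (simp only: sum.atMost_Suc_shift binomial_Suc_Suc of_nat_add distrib_right sum.distrib)
      (simp add: add_ac)
  finally show ?case .
qed simp

lemma geometric_sum_mult_left: "((x::'a::ring_1) - 1) * (\<Sum>i<n. x ^ i) = x ^ n - 1"
  by (induction n) (simp_all add: algebra_simps)

lemma geometric_sum_mult_right: "(\<Sum>i<n. x ^ i) * ((x::'a::ring_1) - 1) = x ^ n - 1"
  by (induction n) (simp_all add: algebra_simps power_commutes)

lemma power_of_nat_mult: "(of_nat k * x) ^ n = of_nat k ^ n * (x::'a::semiring_1) ^ n"
proof (induction n)
  case (Suc n)
  have "x * of_nat k ^ n = of_nat k ^ n * x"
    by (metis mult_of_nat_commute of_nat_power)
  have "(of_nat k * x) ^ Suc n = of_nat k * (x * of_nat k ^ n) * x ^ n"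
    using Suc by (simp add: mult.assoc)
  also have "\<dots> = of_nat k ^ Suc n * x ^ Suc n"
    unfolding \<open>x * of_nat k ^ n = of_nat k ^ n * x\<close> by (simp add: mult.assoc)
  finally show ?case .
qed simp

lemma is_nilpotent_uminus:
  assumes "is_nilpotent x"
  shows "is_nilpotent (- x)"
proof -
  obtain n where "x ^ n = 0"
    using assms unfolding is_nilpotent_def by blast
  then have "(- x) ^ n = 0"
    using power_minus[of x n] by simp
  then show ?thesis
    unfolding is_nilpotent_def by blast
qed

lemma is_unit_ring_1_minus_nilpotent:
  assumes "is_nilpotent x"
  shows "is_unit_ring (1 - x)"
proof -
  obtain k where k: "x ^ k = 0"
    using assms unfolding is_nilpotent_def by blast
  have "(1 - x) * (\<Sum>i<k. x ^ i) = - ((x - 1) * (\<Sum>i<k. x ^ i))"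
    by (simp add: left_diff_distrib)
  then have "(1 - x) * (\<Sum>i<k. x ^ i) = 1"
    by (simp add: geometric_sum_mult_left k)
  moreover have "(\<Sum>i<k. x ^ i) * (1 - x) = - ((\<Sum>i<k. x ^ i) * (x - 1))"
    by (simp add: right_diff_distrib)
  then have "(\<Sum>i<k. x ^ i) * (1 - x) = 1"
    by (simp add: geometric_sum_mult_right k)
  ultimately show ?thesis
    unfolding is_unit_ring_def by blast
qed

lemma is_unit_ring_if_mult_is_unit_ring:
  assumes "is_unit_ring (b * a)" and "is_unit_ring (a * c)"
  shows "is_unit_ring a"
proof -
  obtain v w where v: "v * (b * a) = 1" and w: "(a * c) * w = 1"
    using assms unfolding is_unit_ring_def by blast
  have "v * b = (v * b) * (a * (c * w))"
    using w by (simp add: mult.assoc)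
  also have "\<dots> = c * w"
    using v by (simp flip: mult.assoc)
  finally show ?thesis
    using v w unfolding is_unit_ring_def by (metis mult.assoc)
qed

definition products_in :: "'a::monoid_mult set \<Rightarrow> nat \<Rightarrow> 'a set \<Rightarrow> bool" where
  "products_in A n B \<longleftrightarrow> (\<forall>xs. length xs = n \<longrightarrow> set xs \<subseteq> A \<longrightarrow> prod_list xs \<in> B)"

lemma products_in_1: "products_in A 1 A"
  unfolding products_in_def by (auto simp: length_Suc_conv)

lemma products_in_mult:
  assumes AB: "products_in A m B" and BC: "products_in B n C"
  shows "products_in A (m * n) C"
proof -
  have "\<exists>ys. length ys = k \<and> set ys \<subseteq> B \<and> prod_list xs = prod_list ys"
    if "length xs = m * k" "set xs \<subseteq> A" for xs k
    using that
  proof (induction k arbitrary: xs)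
    case 0
    then show ?case
      by simp
  next
    case (Suc k)
    have "set (take m xs) \<subseteq> A" "set (drop m xs) \<subseteq> A"
      using Suc.prems(2) set_take_subset set_drop_subset by fastforce+
    moreover have "length (take m xs) = m" "length (drop m xs) = m * k"
      using Suc.prems(1) by simp_all
    ultimately obtain ys where "length ys = k" "set ys \<subseteq> B" "prod_list (drop m xs) = prod_list ys"
      and "prod_list (take m xs) \<in> B"
      using Suc.IH AB unfolding products_in_def by blast
    moreover have "prod_list xs = prod_list (take m xs) * prod_list (drop m xs)"
      by (metis append_take_drop_id prod_list.append)
    ultimately show ?case
      by (intro exI[of _ "prod_list (take m xs) # ys"]) simp
  qed
  then show ?thesis
    using BC unfolding products_in_def by (metis mult.commute)
qed

section \<open>Finite p-groups\<close>

lemma (in group_action) singleton_orbits: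
  "{X \<in> orbits G E \<phi>. card X = 1} = (\<lambda>x. {x}) ` {x \<in> E. \<forall>g \<in> carrier G. \<phi> g x = x}"
  (is "?L = (\<lambda>x. {x}) ` ?F")
proof -
  have singleton: "orbit G \<phi> x = {x} \<longleftrightarrow> x \<in> ?F" if "x \<in> E" for x
    using that orbit_refl[OF that] unfolding orbit_def by auto
  show ?thesis
  proof (intro equalityI subsetI)
    fix X assume "X \<in> ?L"
    then obtain x where x: "x \<in> E" "X = orbit G \<phi> x" "card X = 1"
      unfolding orbits_def by blast
    then have "X = {x}"
      using orbit_refl[OF x(1)] by (metis card_1_singletonE singletonD)
    then show "X \<in> (\<lambda>x. {x}) ` ?F"
      using singleton x by blast
  next
    fix X assume "X \<in> (\<lambda>x. {x}) ` ?F"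
    then obtain x where "x \<in> ?F" "X = {x}"
      by blast
    then show "X \<in> ?L"
      using singleton unfolding orbits_def by auto
  qed
qed

lemma (in group_action) card_fixed_points_mod:
  assumes "prime p" and "order G = p ^ n" and "finite E"
  shows "card {x \<in> E. \<forall>g \<in> carrier G. \<phi> g x = x} mod p = card E mod p"
proof -
  let ?Orb = "orbits G E \<phi>" and ?F = "{x \<in> E. \<forall>g \<in> carrier G. \<phi> g x = x}"
  have fin: "finite ?Orb"
    unfolding orbits_def using assms(3) by simp
  have orbit_size: "card (orbit G \<phi> x) = 1 \<or> p dvd card (orbit G \<phi> x)" if "x \<in> E" for x
  proof -
    have "card (orbit G \<phi> x) dvd p ^ n"
      using orbit_stabilizer_theorem[OF that] assms(2) by (metis dvd_triv_left)
    then obtain i where "card (orbit G \<phi> x) = p ^ i"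
      using divides_primepow_nat[OF assms(1)] by blast
    then show ?thesis by (cases i) auto
  qed
  have "card E = (\<Sum>X \<in> ?Orb. \<Sum>x \<in> X. 1)"
    using disjoint_sum[OF assms(3), of "\<lambda>_. 1::nat"] by (simp only: card_eq_sum)
  then have "card E mod p = (\<Sum>X \<in> ?Orb. card X mod p) mod p"
    by (simp add: mod_sum_eq)
  also have "(\<Sum>X \<in> ?Orb. card X mod p) = (\<Sum>X \<in> ?Orb. if card X = 1 then 1 else 0)"
    using orbit_size prime_gt_1_nat[OF assms(1)] unfolding orbits_def
    by (intro sum.cong) (auto simp: dvd_eq_mod_eq_0)
  also have "\<dots> = card {X \<in> ?Orb. card X = 1}"
    using fin by (simp add: sum.If_cases Int_def conj_commute)
  also have "{X \<in> ?Orb. card X = 1} = (\<lambda>x. {x}) ` ?F"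
    by (rule singleton_orbits)
  also have "card \<dots> = card ?F"
    by (simp add: card_image)
  finally show ?thesis ..
qed

lemma (in group) pgroup_center_nontrivial:
  assumes "prime p" and "order G = p ^ n" and "n > 0"
  shows "\<exists>z \<in> carrier G. z \<noteq> \<one> \<and> (\<forall>g \<in> carrier G. g \<otimes> z = z \<otimes> g)"
proof -
  let ?conj = "\<lambda>g. \<lambda>h \<in> carrier G. g \<otimes> h \<otimes> inv g"
  let ?Z = "{z \<in> carrier G. \<forall>g \<in> carrier G. ?conj g z = z}"
  have fin: "finite (carrier G)"
    using order_gt_0_iff_finite assms(2) prime_gt_0_nat[OF assms(1)] by simp
  have "card ?Z mod p = order G mod p"
    using group_action.card_fixed_points_mod[OF action_by_conjugation assms(1,2) fin]
    by (simp add: order_def)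
  moreover have "p dvd order G"
    using assms(2,3) by (simp add: dvd_power)
  ultimately have "p dvd card ?Z"
    by (simp only: dvd_eq_mod_eq_0)
  have "\<one> \<in> ?Z"
    by simp
  then have "card ?Z > 0"
    using fin by (auto simp: card_gt_0_iff)
  then have "card ?Z \<ge> p"
    using dvd_imp_le[OF \<open>p dvd card ?Z\<close>] by blast
  have "\<not> ?Z \<subseteq> {\<one>}"
  proof
    assume "?Z \<subseteq> {\<one>}"
    then have "card ?Z \<le> 1"
      using card_mono[of "{\<one>}" ?Z] by simp
    then show False
      using \<open>card ?Z \<ge> p\<close> prime_ge_2_nat[OF assms(1)] by linarith
  qed
  then obtain z where z: "z \<in> ?Z" "z \<noteq> \<one>"
    by blast
  have "g \<otimes> z = z \<otimes> g" if "g \<in> carrier G" for g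
  proof -
    have "g \<otimes> z \<otimes> inv g = z"
      using z(1) that by auto
    then show ?thesis
      using z(1) that by (simp add: inv_solve_right')
  qed
  then show ?thesis
    using z by blast
qed

lemma (in group) last_nontrivial_pow_prime_power:
  fixes p :: nat
  assumes "x \<in> carrier G" and "x \<noteq> \<one>" and "x [^] (p ^ n) = \<one>"
  shows "\<exists>k. x [^] (p ^ k) \<noteq> \<one> \<and> (x [^] (p ^ k)) [^] p = \<one>"
  using assms(3)
proof (induction n)
  case 0
  then show ?case using assms(1,2) by (simp add: nat_pow_eone)
next
  case (Suc n)
  then show ?case
    using assms(1) by (cases "x [^] (p ^ n) = \<one>") (auto simp: nat_pow_pow mult.commute)
qed

lemma (in group) pgroup_central_elem_of_prime_order:
  assumes "prime p" and "order G = p ^ n" and "n > 0"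
  shows "\<exists>z \<in> carrier G. z \<noteq> \<one> \<and> z [^] p = \<one> \<and> (\<forall>g \<in> carrier G. g \<otimes> z = z \<otimes> g)"
proof -
  obtain z where z: "z \<in> carrier G" "z \<noteq> \<one>" and central: "\<forall>g \<in> carrier G. g \<otimes> z = z \<otimes> g"
    using pgroup_center_nontrivial[OF assms] by blast
  have "z [^] (p ^ n) = \<one>"
    using pow_order_eq_1[OF z(1)] assms(2) by simp
  then obtain k where "z [^] (p ^ k) \<noteq> \<one>" "(z [^] (p ^ k)) [^] p = \<one>"
    using last_nontrivial_pow_prime_power z by blast
  moreover have "\<forall>g \<in> carrier G. g \<otimes> z [^] (p ^ k) = z [^] (p ^ k) \<otimes> g"
    using central z(1) group_commutes_pow[of z _ "p ^ k"] by auto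
  ultimately show ?thesis
    using z(1) by blast
qed

lemma (in group) exists_elem_of_prime_order:
  assumes "prime q" and "q dvd order G" and "finite (carrier G)"
  shows "\<exists>x \<in> carrier G. x \<noteq> \<one> \<and> x [^] q = \<one>"
proof -
  obtain m where "order G = q ^ 1 * m"
    using assms(2) by auto
  then obtain P where P: "subgroup P G" "card P = q"
    using sylow_thm[OF assms(1) is_group \<open>order G = q ^ 1 * m\<close> assms(3)] by auto
  interpret P: group "G\<lparr>carrier := P\<rparr>"
    using subgroup_imp_group[OF P(1)] .
  have "\<not> P \<subseteq> {\<one>}"
    using card_mono[of "{\<one>}" P] P(2) prime_gt_1_nat[OF assms(1)] by auto
  then obtain x where x: "x \<in> P" "x \<noteq> \<one>"
    by blast
  have "x [^] q = \<one>"
    using P.pow_order_eq_1[of x] x(1) P(2) by (simp add: order_def flip: nat_pow_consistent)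
  then show ?thesis
    using x subgroup.mem_carrier[OF P(1)] by blast
qed

lemma (in group) pgroup_order_eq_prime_power:
  assumes "prime p" and "finite (carrier G)" and "\<forall>x \<in> carrier G. \<exists>k. x [^] (p ^ k) = \<one>"
  shows "\<exists>n. order G = p ^ n"
proof -
  have "order G \<noteq> 0"
    using assms(2) order_gt_0_iff_finite by simp
  moreover have "\<not> is_unit p"
    using assms(1) not_prime_unit by blast
  ultimately obtain m where m: "order G = p ^ multiplicity p (order G) * m" "\<not> p dvd m"
    by (rule multiplicity_decompose')
  have "m = 1"
  proof (rule ccontr)
    assume "m \<noteq> 1"
    then obtain q where q: "prime q" "q dvd m"
      using prime_factor_nat by blast
    then have "q \<noteq> p"
      using m(2) by blast
    have "q dvd order G"
      using q(2) m(1) by (metis dvd_mult)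
    then obtain x where x: "x \<in> carrier G" "x \<noteq> \<one>" "x [^] q = \<one>"
      using exists_elem_of_prime_order[OF q(1) _ assms(2)] by blast
    obtain k where "x [^] (p ^ k) = \<one>"
      using assms(3) x(1) by blast
    then have "ord x dvd gcd q (p ^ k)"
      using x(1,3) by (simp add: pow_eq_id)
    moreover have "coprime q (p ^ k)"
      using \<open>q \<noteq> p\<close> q(1) assms(1) by (simp add: primes_coprime)
    ultimately have "ord x dvd 1"
      by (metis coprime_iff_gcd_eq_1)
    then have "ord x = 1"
      by simp
    then show False
      using x(1,2) ord_eq_1 by blast
  qed
  then show ?thesis
    using m(1) by auto
qed

lemma (in normal) pgroup_exists_central_mod_normal:
  assumes "prime p" and "order G = p ^ n" and "H \<noteq> carrier G"
  shows "\<exists>z \<in> carrier G - H. z [^] p \<in> H \<and> (\<forall>g \<in> carrier G. g \<otimes> z \<otimes> inv g \<otimes> inv z \<in> H)"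
proof -
  interpret Q: group "G Mod H"
    by (rule factorgroup_is_group)
  have fin: "finite (carrier G)"
    using order_gt_0_iff_finite assms(2) prime_gt_0_nat[OF assms(1)] by simp
  have "order (G Mod H) * card H = order G"
    by (simp add: FactGroup_def lagrange order_def subgroup_axioms)
  then have "order (G Mod H) dvd p ^ n"
    using assms(2) dvd_triv_left by metis
  then obtain m where m: "order (G Mod H) = p ^ m"
    using divides_primepow_nat[OF assms(1)] by blast
  have "m > 0"
  proof (rule ccontr)
    assume "\<not> m > 0"
    then have "carrier (G Mod H) = {\<one>\<^bsub>G Mod H\<^esub>}"
      using m Q.order_one_triv_iff by simp
    then show False
      using fact_group_trivial_iff[OF fin] assms(3) by blast
  qed
  then obtain Z where Z: "Z \<in> carrier (G Mod H)" "Z \<noteq> H" "Z [^]\<^bsub>G Mod H\<^esub> p = H"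
    and central: "\<forall>X \<in> carrier (G Mod H). X <#> Z = Z <#> X"
    using Q.pgroup_central_elem_of_prime_order[OF assms(1) m] by auto
  obtain z where z: "z \<in> carrier G" "Z = H #> z"
    using Z(1) unfolding carrier_FactGroup by blast
  have "z \<notin> H"
    using Z(2) z(2) rcos_const[OF is_group] by blast
  moreover have "H #> (z [^] p) = H"
    using Z(3) z hom_nat_pow[OF r_coset_hom_Mod z(1) is_group Q.is_group] by simp
  then have "z [^] p \<in> H"
    using rcos_self[OF nat_pow_closed[OF z(1), of p] is_subgroup] by simp
  moreover have "g \<otimes> z \<otimes> inv g \<otimes> inv z \<in> H" if g: "g \<in> carrier G" for g
  proof -
    have "H #> g \<in> carrier (G Mod H)"
      using g unfolding carrier_FactGroup by blast
    then have "(H #> g) <#> (H #> z) = (H #> z) <#> (H #> g)"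
      using central z(2) by simp
    then have "H #> (g \<otimes> z) = H #> (z \<otimes> g)"
      using g z(1) by (simp add: rcos_sum)
    then have "g \<otimes> z \<in> H #> (z \<otimes> g)"
      using rcos_self[OF m_closed[OF g z(1)] is_subgroup] by simp
    then have "(g \<otimes> z) \<otimes> inv (z \<otimes> g) \<in> H"
      using rcos_module_imp[OF is_group m_closed[OF z(1) g]] by blast
    then show ?thesis
      using g z(1) by (simp add: inv_mult_group m_assoc)
  qed
  ultimately show ?thesis
    using z(1) by blast
qed

section \<open>Subgroups of a group written additively\<close>

lemma gpow_0 [simp]: "gpow g 0 = 0"
  by (simp add: gpow_def)

lemma gpow_Suc: "gpow g (Suc n) = g + gpow g n"
  by (simp add: gpow_def)

lemma gpow_add: "gpow g (m + n) = gpow g m + gpow g n"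
  by (induction m) (simp_all add: gpow_Suc add.assoc)

lemma gpow_Suc_0 [simp]: "gpow g (Suc 0) = g"
  by (simp add: gpow_Suc)

lemma gpow_Suc_right: "gpow g (Suc n) = gpow g n + g"
  using gpow_add[of g n 1] by (simp add: gpow_Suc)

lemma gpow_mult: "gpow g (m * n) = gpow (gpow g m) n"
  by (induction n) (simp_all add: gpow_Suc gpow_add)

lemma gpow_zero_base [simp]: "gpow 0 n = 0"
  by (induction n) (simp_all add: gpow_Suc)

lemma gpow_conj: "h + gpow g n - h = gpow (h + g - h) n"
proof (induction n)
  case (Suc n)
  have "h + gpow g (Suc n) - h = (h + g - h) + (h + gpow g n - h)"
    by (simp add: gpow_Suc diff_conv_add_uminus add.assoc del: add_uminus_conv_diff)
  then show ?case
    using Suc by (simp add: gpow_Suc)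
qed simp

lemma minus_gpow:
  assumes "gpow g e = 0" and "e > 0"
  shows "- gpow g n = gpow g ((e - 1) * n)"
proof -
  have "gpow g n + gpow g ((e - 1) * n) = gpow g (e * n)"
    using assms(2) by (simp add: gpow_add[symmetric] algebra_simps)
  also have "\<dots> = 0"
    by (simp add: gpow_mult assms(1))
  finally show ?thesis
    by (rule minus_unique)
qed

lemma gpow_elem_order:
  assumes "elem_order g > 0"
  shows "gpow g (elem_order g) = 0"
proof -
  have ex: "\<exists>n. n > 0 \<and> gpow g n = 0"
    using assms unfolding elem_order_def by (auto split: if_splits)
  then have "elem_order g = (LEAST n. n > 0 \<and> gpow g n = 0)"
    unfolding elem_order_def by auto
  then show ?thesis
    using LeastI_ex[OF ex] by simp
qed

lemma p_group_gpow_eq_0: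
  assumes "prime p" and "p_group p TYPE('g::group_add)"
  shows "\<exists>k. gpow (g::'g) (p ^ k) = 0"
proof -
  obtain k where k: "elem_order g = p ^ k"
    using assms(2) unfolding p_group_def by blast
  then have "elem_order g > 0"
    using prime_gt_0_nat[OF assms(1)] by simp
  then show ?thesis
    using gpow_elem_order k by metis
qed

definition add_subgroup :: "'g::group_add set \<Rightarrow> bool" where
  "add_subgroup H \<longleftrightarrow> 0 \<in> H \<and> (\<forall>a \<in> H. \<forall>b \<in> H. a + b \<in> H) \<and> (\<forall>a \<in> H. - a \<in> H)"

definition normal_add_subgroup :: "'g::group_add set \<Rightarrow> 'g set \<Rightarrow> bool" where
  "normal_add_subgroup S H \<longleftrightarrow> add_subgroup S \<and> S \<subseteq> H \<and> (\<forall>h \<in> H. \<forall>s \<in> S. h + s - h \<in> S)"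

lemma add_subgroup_zero: "add_subgroup H \<Longrightarrow> 0 \<in> H"
  and add_subgroup_add: "add_subgroup H \<Longrightarrow> a \<in> H \<Longrightarrow> b \<in> H \<Longrightarrow> a + b \<in> H"
  and add_subgroup_uminus: "add_subgroup H \<Longrightarrow> a \<in> H \<Longrightarrow> - a \<in> H"
  by (simp_all add: add_subgroup_def)

lemma add_subgroup_gpow: "add_subgroup H \<Longrightarrow> g \<in> H \<Longrightarrow> gpow g n \<in> H"
  by (induction n) (simp_all add: gpow_Suc add_subgroup_zero add_subgroup_add)

lemma add_subgroup_gen_subgroup: "add_subgroup (gen_subgroup S)"
  by (simp add: add_subgroup_def gen_subgroup.intros)

lemma normal_add_subgroupD: "normal_add_subgroup S H \<Longrightarrow> add_subgroup S" "normal_add_subgroup S H \<Longrightarrow> S \<subseteq> H"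
  by (simp_all add: normal_add_subgroup_def)

lemma normal_add_subgroup_conj:
  "normal_add_subgroup S H \<Longrightarrow> h \<in> H \<Longrightarrow> s \<in> S \<Longrightarrow> h + s - h \<in> S"
  by (simp add: normal_add_subgroup_def)

lemma normal_add_subgroup_conj':
  assumes "normal_add_subgroup S H" "add_subgroup H" "h \<in> H" "s \<in> S"
  shows "- h + s + h \<in> S"
  using normal_add_subgroup_conj[OF assms(1) add_subgroup_uminus[OF assms(2,3)] assms(4)]
  by (simp add: diff_conv_add_uminus del: add_uminus_conv_diff)

definition add_group :: "'g::group_add set \<Rightarrow> 'g monoid" where
  "add_group H = \<lparr>carrier = H, monoid.mult = (+), one = 0\<rparr>"

lemma add_group_simps [simp]:
  "carrier (add_group H) = H" "x \<otimes>\<^bsub>add_group H\<^esub> y = x + y" "\<one>\<^bsub>add_group H\<^esub> = 0"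
  by (simp_all add: add_group_def)

lemma group_add_group:
  assumes "add_subgroup H"
  shows "group (add_group H)"
proof (rule groupI)
  fix x assume "x \<in> carrier (add_group H)"
  then show "\<exists>y \<in> carrier (add_group H). y \<otimes>\<^bsub>add_group H\<^esub> x = \<one>\<^bsub>add_group H\<^esub>"
    using add_subgroup_uminus[OF assms] by (intro bexI[of _ "- x"]) simp_all
qed (simp_all add: assms add_subgroup_zero add_subgroup_add add.assoc)

lemma add_group_pow: "x [^]\<^bsub>add_group H\<^esub> (n::nat) = gpow x n"
  by (induction n) (simp_all add: gpow_Suc_right)

lemma add_group_inv: "add_subgroup H \<Longrightarrow> x \<in> H \<Longrightarrow> inv\<^bsub>add_group H\<^esub> x = - x"
  by (rule group.inv_equality[OF group_add_group]) (simp_all add: add_subgroup_uminus)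

lemma normal_add_group:
  assumes "add_subgroup H" and "normal_add_subgroup S H"
  shows "S \<lhd> add_group H"
proof -
  interpret group "add_group H"
    using group_add_group[OF assms(1)] .
  note S = normal_add_subgroupD[OF assms(2)]
  have "subgroup S (add_group H)"
  proof
    show "x \<otimes>\<^bsub>add_group H\<^esub> y \<in> S" if "x \<in> S" "y \<in> S" for x y
      using add_subgroup_add[OF S(1) that] by simp
    show "inv\<^bsub>add_group H\<^esub> x \<in> S" if "x \<in> S" for x
      using add_group_inv[OF assms(1)] add_subgroup_uminus[OF S(1) that] S(2) that by auto
  qed (use S add_subgroup_zero in auto)
  moreover have "x \<otimes>\<^bsub>add_group H\<^esub> s \<otimes>\<^bsub>add_group H\<^esub> inv\<^bsub>add_group H\<^esub> x \<in> S"
    if "x \<in> H" "s \<in> S" for x s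
    using normal_add_subgroup_conj[OF assms(2) that] add_group_inv[OF assms(1) that(1)] by simp
  ultimately show ?thesis
    by (simp add: normal_inv_iff)
qed

lemma gpow_card_add_subgroup:
  assumes "add_subgroup H" and "finite H" and "g \<in> H"
  shows "gpow g (card H) = 0"
  using group.pow_order_eq_1[OF group_add_group[OF assms(1)], of g] assms(3)
  by (simp add: add_group_pow order_def)

lemma card_add_subgroup_pgroup:
  assumes "prime p" and "add_subgroup H" and "finite H" and "\<forall>g \<in> H. \<exists>k. gpow g (p ^ k) = 0"
  shows "\<exists>n. card H = p ^ n"
  using group.pgroup_order_eq_prime_power[OF group_add_group[OF assms(2)] assms(1)] assms(3,4)
  by (simp add: add_group_pow order_def)

lemma exists_central_mod_normal_add_subgroup:
  assumes "prime p" and "add_subgroup H" and "card H = p ^ n"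
    and "normal_add_subgroup S H" and "S \<noteq> H"
  shows "\<exists>z \<in> H - S. gpow z p \<in> S \<and> (\<forall>h \<in> H. h + z - h - z \<in> S)"
proof -
  obtain z where z: "z \<in> H - S" "z [^]\<^bsub>add_group H\<^esub> p \<in> S"
    and comm: "\<forall>h \<in> H. h \<otimes>\<^bsub>add_group H\<^esub> z \<otimes>\<^bsub>add_group H\<^esub> inv\<^bsub>add_group H\<^esub> h
      \<otimes>\<^bsub>add_group H\<^esub> inv\<^bsub>add_group H\<^esub> z \<in> S"
    using normal.pgroup_exists_central_mod_normal[OF normal_add_group[OF assms(2,4)] assms(1), of n] assms(3,5)
    by (auto simp: order_def)
  have "h + z - h - z \<in> S" if "h \<in> H" for h
    using comm that z(1) by (simp add: add_group_inv[OF assms(2)])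
  then show ?thesis
    using z by (auto simp: add_group_pow)
qed

definition adjoin :: "'g::group_add set \<Rightarrow> 'g \<Rightarrow> 'g set" where
  "adjoin S z = {gpow z j + s | j s. s \<in> S}"

context
  fixes H S :: "'g::group_add set" and z :: 'g
  assumes H: "add_subgroup H" and S: "normal_add_subgroup S H" and z: "z \<in> H"
    and central: "\<forall>h \<in> H. h + z - h - z \<in> S"
begin

lemma gpow_add_normal:
  assumes "c \<in> S"
  shows "\<exists>t \<in> S. gpow (c + z) j = t + gpow z j"
proof (induction j)
  case 0
  then show ?case
    using add_subgroup_zero[OF normal_add_subgroupD(1)[OF S]] by simp
next
  case (Suc j)
  then obtain t where t: "t \<in> S" "gpow (c + z) j = t + gpow z j"
    by blast
  have "gpow (c + z) (Suc j) = (c + (z + t - z)) + gpow z (Suc j)"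
    unfolding gpow_Suc t(2) by (simp add: diff_conv_add_uminus add.assoc del: add_uminus_conv_diff)
  moreover have "c + (z + t - z) \<in> S"
    using add_subgroup_add[OF normal_add_subgroupD(1)[OF S] assms normal_add_subgroup_conj[OF S z t(1)]] .
  ultimately show ?case
    by blast
qed

lemma conj_gpow_central:
  assumes "h \<in> H"
  shows "\<exists>t \<in> S. h + gpow z j - h = t + gpow z j"
proof -
  have "h + z - h = (h + z - h - z) + z"
    by simp
  then show ?thesis
    using gpow_add_normal[of "h + z - h - z" j] central assms by (simp add: gpow_conj)
qed

lemma subset_adjoin: "S \<subseteq> adjoin S z"
  unfolding adjoin_def by (force intro: exI[of _ 0])

lemma psubset_adjoin:
  assumes "z \<notin> S"
  shows "S \<subset> adjoin S z"
proof -
  have "z = gpow z 1 + 0"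
    by simp
  then have "z \<in> adjoin S z"
    unfolding adjoin_def using add_subgroup_zero[OF normal_add_subgroupD(1)[OF S]] by blast
  then show ?thesis
    using subset_adjoin assms by blast
qed

lemma adjoin_subset: "adjoin S z \<subseteq> H"
  unfolding adjoin_def using normal_add_subgroupD(2)[OF S] add_subgroup_gpow[OF H z] add_subgroup_add[OF H] by blast

lemma add_subgroup_adjoin:
  assumes "finite H"
  shows "add_subgroup (adjoin S z)"
  unfolding add_subgroup_def
proof (intro conjI ballI)
  show "0 \<in> adjoin S z"
    using subset_adjoin add_subgroup_zero[OF normal_add_subgroupD(1)[OF S]] by blast
next
  fix a b assume "a \<in> adjoin S z" "b \<in> adjoin S z"
  then obtain i s j t where a: "a = gpow z i + s" "s \<in> S" and b: "b = gpow z j + t" "t \<in> S"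
    unfolding adjoin_def by blast
  have "a + b = gpow z (i + j) + ((- gpow z j + s + gpow z j) + t)"
    unfolding a b gpow_add by (simp add: add.assoc)
  moreover have "(- gpow z j + s + gpow z j) + t \<in> S"
    using normal_add_subgroup_conj'[OF S H add_subgroup_gpow[OF H z] a(2)] b(2)
    by (rule add_subgroup_add[OF normal_add_subgroupD(1)[OF S]])
  ultimately show "a + b \<in> adjoin S z"
    unfolding adjoin_def by blast
next
  fix a assume "a \<in> adjoin S z"
  then obtain i s where a: "a = gpow z i + s" "s \<in> S"
    unfolding adjoin_def by blast
  have e: "gpow z (card H) = 0" "card H > 0"
    using gpow_card_add_subgroup[OF H assms z] assms add_subgroup_zero[OF H] card_gt_0_iff by blast+
  have "- a = gpow z ((card H - 1) * i) + (gpow z i + - s - gpow z i)"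
    unfolding a minus_gpow[OF e, symmetric]
    by (simp add: minus_add diff_conv_add_uminus add.assoc del: add_uminus_conv_diff)
  moreover have "gpow z i + - s - gpow z i \<in> S"
    using normal_add_subgroup_conj[OF S add_subgroup_gpow[OF H z]]
      add_subgroup_uminus[OF normal_add_subgroupD(1)[OF S] a(2)] .
  ultimately show "- a \<in> adjoin S z"
    unfolding adjoin_def by blast
qed

lemma normal_add_subgroup_adjoin:
  assumes "finite H"
  shows "normal_add_subgroup (adjoin S z) H"
proof -
  have "h + a - h \<in> adjoin S z" if h: "h \<in> H" and a: "a \<in> adjoin S z" for h a
  proof -
    obtain j s where a: "a = gpow z j + s" "s \<in> S"
      using a unfolding adjoin_def by blast
    obtain t where t: "t \<in> S" "h + gpow z j - h = t + gpow z j"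
      using conj_gpow_central[OF h] by blast
    have "h + a - h = (h + gpow z j - h) + (h + s - h)"
      unfolding a by (simp add: diff_conv_add_uminus add.assoc del: add_uminus_conv_diff)
    also have "\<dots> = gpow z j + ((- gpow z j + t + gpow z j) + (h + s - h))"
      unfolding t(2) by (simp add: add.assoc)
    finally show ?thesis
      unfolding adjoin_def
      using add_subgroup_add[OF normal_add_subgroupD(1)[OF S]
          normal_add_subgroup_conj'[OF S H add_subgroup_gpow[OF H z] t(1)]
          normal_add_subgroup_conj[OF S h a(2)]]
      by blast
  qed
  then show ?thesis
    unfolding normal_add_subgroup_def using add_subgroup_adjoin[OF assms] adjoin_subset by blast
qed

end

section \<open>The group ring\<close>

definition of_grp :: "'g::group_add \<Rightarrow> ('g \<Rightarrow>\<^sub>0 'a::ring_1)" where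
  "of_grp g = Poly_Mapping.single g 1"

definition scalar :: "'a::ring_1 \<Rightarrow> ('g::group_add \<Rightarrow>\<^sub>0 'a)" where
  "scalar r = Poly_Mapping.single 0 r"

lemma of_grp_mult: "of_grp g * of_grp h = of_grp (g + h)"
  by (simp add: of_grp_def mult_single)

lemma of_grp_0 [simp]: "of_grp 0 = 1"
  by (simp add: of_grp_def)

lemma of_grp_power: "of_grp g ^ n = of_grp (gpow g n)"
  by (induction n) (simp_all add: of_grp_mult gpow_Suc)

lemma scalar_mult: "scalar r * scalar s = scalar (r * s)"
  by (simp add: scalar_def mult_single)

lemma scalar_0 [simp]: "scalar 0 = 0"
  and scalar_1 [simp]: "scalar 1 = 1"
  and scalar_add: "scalar (r + s) = scalar r + scalar s"
  and scalar_diff: "scalar (r - s) = scalar r - scalar s"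
  and scalar_of_nat: "scalar (of_nat n) = of_nat n"
  by (simp_all add: scalar_def single_add single_diff)

lemma scalar_power: "scalar r ^ n = scalar (r ^ n)"
  by (induction n) (simp_all add: scalar_mult)

lemma scalar_sum: "scalar (sum f I) = (\<Sum>i \<in> I. scalar (f i))"
  by (induction I rule: infinite_finite_induct) (simp_all add: scalar_add)

lemma single_eq_scalar_mult: "Poly_Mapping.single g r = scalar r * of_grp g"
  by (simp add: scalar_def of_grp_def mult_single)

lemma scalar_of_grp_commute: "scalar r * of_grp g = of_grp g * scalar r"
  by (simp add: scalar_def of_grp_def mult_single)

lemma poly_mapping_sum_single:
  "x = (\<Sum>g \<in> Poly_Mapping.keys x. Poly_Mapping.single g (Poly_Mapping.lookup x g))"
proof (rule poly_mapping_eqI)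
  fix k
  have "Poly_Mapping.lookup (\<Sum>g \<in> Poly_Mapping.keys x. Poly_Mapping.single g (Poly_Mapping.lookup x g)) k
      = (\<Sum>g \<in> Poly_Mapping.keys x. if g = k then Poly_Mapping.lookup x g else 0)"
    unfolding lookup_sum by (intro sum.cong refl) (simp add: lookup_single when_def)
  also have "\<dots> = Poly_Mapping.lookup x k"
    by (simp add: sum.delta' in_keys_iff)
  finally show "Poly_Mapping.lookup x k
      = Poly_Mapping.lookup (\<Sum>g \<in> Poly_Mapping.keys x. Poly_Mapping.single g (Poly_Mapping.lookup x g)) k"
    by simp
qed

definition group_subring :: "'g::group_add set \<Rightarrow> ('g \<Rightarrow>\<^sub>0 'a::ring_1) set" where
  "group_subring H = {x. Poly_Mapping.keys x \<subseteq> H}"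

lemma group_subring_0 [simp]: "0 \<in> group_subring H"
  by (simp add: group_subring_def)

lemma group_subring_single: "g \<in> H \<Longrightarrow> Poly_Mapping.single g r \<in> group_subring H"
  by (simp add: group_subring_def)

lemma group_subring_of_grp: "g \<in> H \<Longrightarrow> of_grp g \<in> group_subring H"
  by (simp add: of_grp_def group_subring_single)

lemma group_subring_scalar: "add_subgroup H \<Longrightarrow> scalar r \<in> group_subring H"
  by (simp add: scalar_def group_subring_single add_subgroup_zero)

lemma group_subring_1: "add_subgroup H \<Longrightarrow> 1 \<in> group_subring H"
  using group_subring_scalar[of H 1] by simp

lemma group_subring_of_nat: "add_subgroup H \<Longrightarrow> of_nat n \<in> group_subring H"
  using group_subring_scalar[of H "of_nat n"] by (simp add: scalar_of_nat)

lemma group_subring_add: "x \<in> group_subring H \<Longrightarrow> y \<in> group_subring H \<Longrightarrow> x + y \<in> group_subring H"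
  unfolding group_subring_def using keys_add[of x y] by blast

lemma group_subring_uminus: "x \<in> group_subring H \<Longrightarrow> - x \<in> group_subring H"
  by (simp add: group_subring_def)

lemma group_subring_diff: "x \<in> group_subring H \<Longrightarrow> y \<in> group_subring H \<Longrightarrow> x - y \<in> group_subring H"
  by (metis diff_conv_add_uminus group_subring_add group_subring_uminus)

lemma group_subring_mult:
  assumes "add_subgroup H" and "x \<in> group_subring H" and "y \<in> group_subring H"
  shows "x * y \<in> group_subring H"
  using keys_mult[of x y] assms add_subgroup_add[OF assms(1)] unfolding group_subring_def by blast

lemma group_subring_power: "add_subgroup H \<Longrightarrow> x \<in> group_subring H \<Longrightarrow> x ^ n \<in> group_subring H"
  by (induction n) (simp_all add: group_subring_1 group_subring_mult)

lemma group_subring_sum: "(\<And>i. i \<in> I \<Longrightarrow> f i \<in> group_subring H) \<Longrightarrow> sum f I \<in> group_subring H"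
  by (induction I rule: infinite_finite_induct) (simp_all add: group_subring_add)

text \<open>The ideal \<open>J(S)\<close> of the overview, inside the subring \<open>R[H]\<close>.\<close>

inductive_set aug_ideal :: "nat \<Rightarrow> 'g::group_add set \<Rightarrow> 'g set \<Rightarrow> ('g \<Rightarrow>\<^sub>0 'a::ring_1) set"
  for p H S where
  gen: "s \<in> S \<Longrightarrow> of_grp s - 1 \<in> aug_ideal p H S"
| of_nat_p: "of_nat p \<in> aug_ideal p H S"
| add: "x \<in> aug_ideal p H S \<Longrightarrow> y \<in> aug_ideal p H S \<Longrightarrow> x + y \<in> aug_ideal p H S"
| mult_left: "c \<in> group_subring H \<Longrightarrow> x \<in> aug_ideal p H S \<Longrightarrow> c * x \<in> aug_ideal p H S"
| mult_right: "c \<in> group_subring H \<Longrightarrow> x \<in> aug_ideal p H S \<Longrightarrow> x * c \<in> aug_ideal p H S"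

lemma aug_ideal_0: "0 \<in> aug_ideal p H S"
  using aug_ideal.mult_left[OF group_subring_0 aug_ideal.of_nat_p] by simp

lemma aug_ideal_uminus: "add_subgroup H \<Longrightarrow> x \<in> aug_ideal p H S \<Longrightarrow> - x \<in> aug_ideal p H S"
  using aug_ideal.mult_left[OF group_subring_uminus[OF group_subring_1]] by fastforce

lemma aug_ideal_diff:
  "add_subgroup H \<Longrightarrow> x \<in> aug_ideal p H S \<Longrightarrow> y \<in> aug_ideal p H S \<Longrightarrow> x - y \<in> aug_ideal p H S"
  by (metis aug_ideal.add aug_ideal_uminus diff_conv_add_uminus)

lemma aug_ideal_sum: "(\<And>i. i \<in> I \<Longrightarrow> f i \<in> aug_ideal p H S) \<Longrightarrow> sum f I \<in> aug_ideal p H S"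
  by (induction I rule: infinite_finite_induct) (simp_all add: aug_ideal_0 aug_ideal.add)

lemma aug_ideal_subset_group_subring:
  assumes "add_subgroup H" and "S \<subseteq> H" and "x \<in> aug_ideal p H S"
  shows "x \<in> group_subring H"
  using assms(3)
  by induction (use assms in \<open>auto intro: group_subring_diff group_subring_of_grp group_subring_1
      group_subring_of_nat group_subring_add group_subring_mult\<close>)

lemma aug_ideal_trivial_subgroup:
  assumes "x \<in> aug_ideal p H {0}"
  shows "\<exists>y. x = of_nat p * y"
  using assms
proof induction
  case (gen s)
  then show ?case
    by (intro exI[of _ 0]) simp
next
  case of_nat_p
  then show ?case
    by (intro exI[of _ 1]) simp
next
  case (add x y)
  then show ?case
    by (metis distrib_left)
next
  case (mult_left c x)
  then show ?case
    by (metis mult.assoc mult_of_nat_commute)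
next
  case (mult_right c x)
  then show ?case
    by (metis mult.assoc)
qed

definition augmentation :: "('g::group_add \<Rightarrow>\<^sub>0 'a::ring_1) \<Rightarrow> 'a" where
  "augmentation x = (\<Sum>g \<in> Poly_Mapping.keys x. Poly_Mapping.lookup x g)"

lemma diff_scalar_augmentation_mem_aug_ideal:
  assumes "add_subgroup H" and "x \<in> group_subring H"
  shows "x - scalar (augmentation x) \<in> aug_ideal p H H"
proof -
  have "x - scalar (augmentation x)
      = (\<Sum>g \<in> Poly_Mapping.keys x. scalar (Poly_Mapping.lookup x g) * (of_grp g - 1))"
    by (subst (1) poly_mapping_sum_single)
      (simp add: augmentation_def scalar_sum right_diff_distrib single_eq_scalar_mult sum_subtractf)
  also have "\<dots> \<in> aug_ideal p H H"
    using assms unfolding group_subring_def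
    by (intro aug_ideal_sum aug_ideal.mult_left group_subring_scalar aug_ideal.gen) auto
  finally show ?thesis .
qed

context
  fixes H S :: "'g::group_add set" and z :: 'g
  assumes H: "add_subgroup H" and S: "normal_add_subgroup S H" and z: "z \<in> H"
    and central: "\<forall>h \<in> H. h + z - h - z \<in> S"
begin

lemma of_grp_commutator_mem_aug_ideal:
  assumes "g \<in> H"
  shows "of_grp g * (of_grp z - 1) - (of_grp z - 1) * of_grp g \<in> aug_ideal p H S"
proof -
  have "(g + z - g - z) + (z + g) = g + z"
    by (simp add: diff_conv_add_uminus add.assoc del: add_uminus_conv_diff)
  then have "of_grp g * (of_grp z - 1) - (of_grp z - 1) * of_grp g
      = (of_grp (g + z - g - z) - 1) * of_grp (z + g)"
    by (simp add: left_diff_distrib right_diff_distrib of_grp_mult)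
  also have "\<dots> \<in> aug_ideal p H S"
    using central assms add_subgroup_add[OF H z assms]
    by (intro aug_ideal.mult_right group_subring_of_grp aug_ideal.gen) auto
  finally show ?thesis .
qed

lemma commutator_mem_aug_ideal:
  assumes "c \<in> group_subring H"
  shows "c * (of_grp z - 1) - (of_grp z - 1) * c \<in> aug_ideal p H S"
proof -
  have scalar_commute: "(of_grp z - 1) * scalar r = scalar r * (of_grp z - 1)" for r :: 'a
    by (simp add: left_diff_distrib right_diff_distrib scalar_of_grp_commute)
  have "c * (of_grp z - 1) - (of_grp z - 1) * c = (\<Sum>g \<in> Poly_Mapping.keys c.
      scalar (Poly_Mapping.lookup c g) * (of_grp g * (of_grp z - 1) - (of_grp z - 1) * of_grp g))"
    by (subst (1 2) poly_mapping_sum_single)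
      (simp add: single_eq_scalar_mult sum_distrib_left sum_distrib_right sum_subtractf
        right_diff_distrib scalar_commute flip: mult.assoc)
  also have "\<dots> \<in> aug_ideal p H S"
    using assms unfolding group_subring_def
    by (intro aug_ideal_sum aug_ideal.mult_left group_subring_scalar H of_grp_commutator_mem_aug_ideal) auto
  finally show ?thesis .
qed

lemma commutator_power_mem_aug_ideal:
  assumes "c \<in> group_subring H"
  shows "c * (of_grp z - 1) ^ n - (of_grp z - 1) ^ n * c \<in> aug_ideal p H S"
proof (induction n)
  case 0
  then show ?case
    by (simp add: aug_ideal_0)
next
  case (Suc n)
  have "c * (of_grp z - 1) ^ Suc n - (of_grp z - 1) ^ Suc n * c
      = (c * (of_grp z - 1) ^ n - (of_grp z - 1) ^ n * c) * (of_grp z - 1)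
        + (of_grp z - 1) ^ n * (c * (of_grp z - 1) - (of_grp z - 1) * c)"
    by (simp only: power_Suc2 left_diff_distrib right_diff_distrib mult.assoc) (simp add: algebra_simps)
  also have "\<dots> \<in> aug_ideal p H S"
    using Suc assms commutator_mem_aug_ideal z H
    by (intro aug_ideal.add aug_ideal.mult_right aug_ideal.mult_left group_subring_power
        group_subring_diff group_subring_of_grp group_subring_1) auto
  finally show ?case .
qed

lemma aug_ideal_adjoin_decompose:
  assumes "y \<in> aug_ideal p H (adjoin S z)"
  shows "\<exists>t c. t \<in> aug_ideal p H S \<and> c \<in> group_subring H \<and> y = t + (of_grp z - 1) * c"
  using assms
proof induction
  case (gen s')
  then obtain j s where s': "s' = gpow z j + s" and s: "s \<in> S"
    unfolding adjoin_def by blast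
  have "of_grp s' - 1 = of_grp (gpow z j) * (of_grp s - 1) + (of_grp z - 1) * (\<Sum>i<j. of_grp z ^ i)"
    unfolding geometric_sum_mult_left s' by (simp add: of_grp_power right_diff_distrib of_grp_mult)
  moreover have "of_grp (gpow z j) * (of_grp s - 1) \<in> aug_ideal p H S"
    using s by (intro aug_ideal.mult_left aug_ideal.gen group_subring_of_grp add_subgroup_gpow H z)
  moreover have "(\<Sum>i<j. of_grp z ^ i) \<in> group_subring H"
    by (intro group_subring_sum group_subring_power group_subring_of_grp H z)
  ultimately show ?case
    by blast
next
  case of_nat_p
  then show ?case
    using aug_ideal.of_nat_p by (intro exI[of _ "of_nat p"] exI[of _ 0]) auto
next
  case (add x y)
  then obtain t c t' c' where "t \<in> aug_ideal p H S" "c \<in> group_subring H" "x = t + (of_grp z - 1) * c"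
    "t' \<in> aug_ideal p H S" "c' \<in> group_subring H" "y = t' + (of_grp z - 1) * c'"
    by blast
  then show ?case
    by (intro exI[of _ "t + t'"] exI[of _ "c + c'"])
      (simp add: aug_ideal.add group_subring_add distrib_left add_ac)
next
  case (mult_left d x)
  then obtain t c where tc: "t \<in> aug_ideal p H S" "c \<in> group_subring H" "x = t + (of_grp z - 1) * c"
    by blast
  define u where "u = d * (of_grp z - 1) - (of_grp z - 1) * d"
  have "d * x = (d * t + u * c) + (of_grp z - 1) * (d * c)"
    unfolding tc(3) u_def by (simp add: algebra_simps)
  moreover have "d * t + u * c \<in> aug_ideal p H S"
    unfolding u_def using mult_left(1) tc
    by (intro aug_ideal.add aug_ideal.mult_left aug_ideal.mult_right commutator_mem_aug_ideal)
  moreover have "d * c \<in> group_subring H"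
    using mult_left(1) tc(2) by (rule group_subring_mult[OF H])
  ultimately show ?case
    by blast
next
  case (mult_right d x)
  then obtain t c where tc: "t \<in> aug_ideal p H S" "c \<in> group_subring H" "x = t + (of_grp z - 1) * c"
    by blast
  have "x * d = t * d + (of_grp z - 1) * (c * d)"
    unfolding tc(3) by (simp add: algebra_simps)
  moreover have "t * d \<in> aug_ideal p H S"
    using mult_right(1) tc(1) by (rule aug_ideal.mult_right)
  moreover have "c * d \<in> group_subring H"
    using tc(2) mult_right(1) by (rule group_subring_mult[OF H])
  ultimately show ?case
    by blast
qed

lemma prod_list_aug_ideal_adjoin:
  assumes "set ys \<subseteq> aug_ideal p H (adjoin S z)"
  shows "\<exists>t c. t \<in> aug_ideal p H S \<and> c \<in> group_subring H
    \<and> prod_list ys = t + (of_grp z - 1) ^ length ys * c"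
  using assms
proof (induction ys)
  case Nil
  show ?case
    by (intro exI[of _ 0] exI[of _ 1]) (simp add: aug_ideal_0 group_subring_1 H)
next
  case (Cons y ys)
  let ?x = "of_grp z - 1 :: 'g \<Rightarrow>\<^sub>0 'a" and ?n = "length ys"
  obtain t c where tc: "t \<in> aug_ideal p H S" "c \<in> group_subring H" "prod_list ys = t + ?x ^ ?n * c"
    using Cons by auto
  have y: "y \<in> aug_ideal p H (adjoin S z)"
    using Cons.prems by simp
  then obtain t' c' where tc': "t' \<in> aug_ideal p H S" "c' \<in> group_subring H" "y = t' + ?x * c'"
    using aug_ideal_adjoin_decompose by blast
  define u where "u = c' * ?x ^ ?n - ?x ^ ?n * c'"
  have "prod_list (y # ys) = (y * t + t' * ?x ^ ?n * c + ?x * u * c) + ?x ^ Suc ?n * (c' * c)"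
    unfolding u_def by (simp add: tc(3) tc'(3) algebra_simps)
  moreover have "y * t + t' * ?x ^ ?n * c + ?x * u * c \<in> aug_ideal p H S"
    unfolding u_def
    using aug_ideal_subset_group_subring[OF H adjoin_subset[OF H S z central] y] tc tc' commutator_power_mem_aug_ideal z H
    by (intro aug_ideal.add aug_ideal.mult_left aug_ideal.mult_right group_subring_power
        group_subring_diff group_subring_of_grp group_subring_1) auto
  moreover have "c' * c \<in> group_subring H"
    using tc'(2) tc(2) by (rule group_subring_mult[OF H])
  ultimately show ?case
    by auto
qed

lemma of_grp_minus_1_power_prime_mem_aug_ideal:
  assumes "prime p" and "gpow z p \<in> S"
  shows "(of_grp z - 1) ^ p \<in> aug_ideal p H S"
proof -
  let ?x = "of_grp z - 1 :: 'g \<Rightarrow>\<^sub>0 'a"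
  let ?mid = "\<Sum>k \<in> {1..<p}. of_nat (p choose k) * ?x ^ k"
  have "{..p} = insert 0 (insert p {1..<p})"
    using prime_gt_0_nat[OF assms(1)] by auto
  then have "of_grp (gpow z p) = 1 + (?x ^ p + ?mid)"
    using binomial_add_1[of ?x p] prime_gt_0_nat[OF assms(1)] by (simp add: of_grp_power)
  then have "?x ^ p = (of_grp (gpow z p) - 1) - ?mid"
    by (simp add: algebra_simps)
  also have "\<dots> \<in> aug_ideal p H S"
  proof (intro aug_ideal_diff[OF H aug_ideal.gen[OF assms(2)]] aug_ideal_sum)
    fix k assume "k \<in> {1..<p}"
    then have "p dvd (p choose k)"
      using prime_gt_0_nat[OF assms(1)] by (intro dvd_choose_prime assms(1)) auto
    then obtain q where q: "p choose k = p * q"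
      by blast
    have "of_nat (p choose k) * ?x ^ k = of_nat p * (of_nat q * ?x ^ k)"
      unfolding q by (simp add: mult.assoc)
    also have "\<dots> \<in> aug_ideal p H S"
      by (intro aug_ideal.mult_right aug_ideal.of_nat_p group_subring_mult group_subring_of_nat
          group_subring_power group_subring_diff group_subring_of_grp group_subring_1 H z)
    finally show "of_nat (p choose k) * ?x ^ k \<in> aug_ideal p H S" .
  qed
  finally show ?thesis .
qed

lemma products_in_aug_ideal_adjoin:
  assumes "prime p" and "gpow z p \<in> S"
  shows "products_in (aug_ideal p H (adjoin S z)) p (aug_ideal p H S :: ('g \<Rightarrow>\<^sub>0 'a::ring_1) set)"
  unfolding products_in_def
proof (intro allI impI)
  fix ys :: "('g \<Rightarrow>\<^sub>0 'a) list"
  assume "length ys = p" "set ys \<subseteq> aug_ideal p H (adjoin S z)"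
  then obtain t c where tc: "t \<in> aug_ideal p H S" "c \<in> group_subring H"
    "prod_list ys = t + (of_grp z - 1) ^ p * c"
    using prod_list_aug_ideal_adjoin by metis
  then show "prod_list ys \<in> aug_ideal p H S"
    using aug_ideal.mult_right[OF tc(2) of_grp_minus_1_power_prime_mem_aug_ideal[OF assms]]
    by (simp add: aug_ideal.add)
qed

end

lemma products_in_aug_ideal_normal:
  assumes "prime p" and "add_subgroup H" and "card H = p ^ n" and "normal_add_subgroup S H"
  shows "\<exists>N. products_in (aug_ideal p H H) N (aug_ideal p H S :: ('g::group_add \<Rightarrow>\<^sub>0 'a::ring_1) set)"
  using assms(4)
proof (induction "card H - card S" arbitrary: S rule: less_induct)
  case less
  have "card H > 0"
    using assms(1,3) prime_gt_0_nat by simp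
  then have fin: "finite H"
    using card_gt_0_iff by blast
  show ?case
  proof (cases "S = H")
    case True
    then show ?thesis
      using products_in_1 by blast
  next
    case False
    obtain z where z: "z \<in> H" "z \<notin> S" "gpow z p \<in> S" and central: "\<forall>h \<in> H. h + z - h - z \<in> S"
      using exists_central_mod_normal_add_subgroup[OF assms(1,2,3) less.prems False] by blast
    let ?S' = "adjoin S z"
    have normal: "normal_add_subgroup ?S' H"
      by (rule normal_add_subgroup_adjoin[OF assms(2) less.prems z(1) central fin])
    have S'H: "?S' \<subseteq> H"
      by (rule adjoin_subset[OF assms(2) less.prems z(1) central])
    have "card S < card ?S'"
      using psubset_card_mono[OF finite_subset[OF S'H fin] psubset_adjoin[OF assms(2) less.prems z(1) central z(2)]]
      by blast
    moreover have "card ?S' \<le> card H"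
      using card_mono[OF fin S'H] .
    ultimately have "card H - card ?S' < card H - card S"
      by linarith
    then obtain N where "products_in (aug_ideal p H H) N (aug_ideal p H ?S' :: ('g \<Rightarrow>\<^sub>0 'a) set)"
      using less.hyps normal by blast
    then have "products_in (aug_ideal p H H) (N * p) (aug_ideal p H S :: ('g \<Rightarrow>\<^sub>0 'a) set)"
      using products_in_aug_ideal_adjoin[OF assms(2) less.prems z(1) central assms(1) z(3)]
      by (rule products_in_mult)
    then show ?thesis
      by blast
  qed
qed

lemma aug_ideal_is_nilpotent:
  assumes "prime p" and "add_subgroup H" and "card H = p ^ n"
    and "is_nilpotent (of_nat p :: 'a)" and "y \<in> aug_ideal p H H"
  shows "is_nilpotent (y :: 'g::group_add \<Rightarrow>\<^sub>0 'a::ring_1)"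
proof -
  have "normal_add_subgroup {0} H"
    using add_subgroup_zero[OF assms(2)] by (simp add: normal_add_subgroup_def add_subgroup_def)
  then obtain N where "products_in (aug_ideal p H H) N (aug_ideal p H {0} :: ('g \<Rightarrow>\<^sub>0 'a) set)"
    using products_in_aug_ideal_normal[OF assms(1,2,3)] by blast
  moreover have "set (replicate N y) \<subseteq> aug_ideal p H H"
    using assms(5) by (simp add: set_replicate_conv_if)
  ultimately have "y ^ N \<in> aug_ideal p H {0}"
    unfolding products_in_def by (metis length_replicate prod_list_replicate)
  then obtain x where x: "y ^ N = of_nat p * x"
    using aug_ideal_trivial_subgroup by blast
  obtain m where "(of_nat p :: 'a) ^ m = 0"
    using assms(4) unfolding is_nilpotent_def by blast
  then have "(of_nat p :: 'g \<Rightarrow>\<^sub>0 'a) ^ m = 0"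
    by (metis scalar_0 scalar_of_nat scalar_power)
  then have "y ^ (N * m) = 0"
    unfolding power_mult x power_of_nat_mult by simp
  then show ?thesis
    unfolding is_nilpotent_def by blast
qed

lemma is_unit_ring_scalar_add:
  fixes y :: "'g::group_add \<Rightarrow>\<^sub>0 'a::ring_1"
  assumes "add_subgroup H" and "is_unit_ring r" and "y \<in> aug_ideal p H S"
    and nil: "\<forall>x \<in> aug_ideal p H S. is_nilpotent (x :: 'g \<Rightarrow>\<^sub>0 'a)"
  shows "is_unit_ring (scalar r + y)"
proof -
  obtain u where u: "r * u = 1" "u * r = 1"
    using assms(2) unfolding is_unit_ring_def by blast
  have "scalar u * (scalar r + y) = 1 - (- (scalar u * y))"
    using u(2) by (simp add: distrib_left scalar_mult)
  moreover have "(scalar r + y) * scalar u = 1 - (- (y * scalar u))"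
    using u(1) by (simp add: distrib_right scalar_mult)
  moreover have "scalar u * y \<in> aug_ideal p H S" "y * scalar u \<in> aug_ideal p H S"
    using assms(3) group_subring_scalar[OF assms(1)] by (auto intro: aug_ideal.mult_left aug_ideal.mult_right)
  ultimately have "is_unit_ring (scalar u * (scalar r + y))" "is_unit_ring ((scalar r + y) * scalar u)"
    using nil by (metis is_unit_ring_1_minus_nilpotent is_nilpotent_uminus)+
  then show ?thesis
    by (rule is_unit_ring_if_mult_is_unit_ring)
qed

lemma is_nilpotent_scalar_add:
  fixes y :: "'g::group_add \<Rightarrow>\<^sub>0 'a::ring_1"
  assumes "add_subgroup H" and "is_nilpotent q" and "y \<in> aug_ideal p H H"
    and nil: "\<forall>x \<in> aug_ideal p H H. is_nilpotent (x :: 'g \<Rightarrow>\<^sub>0 'a)"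
  shows "is_nilpotent (scalar q + y)"
proof -
  have yH: "y \<in> group_subring H"
    using aug_ideal_subset_group_subring[OF assms(1) _ assms(3)] by simp
  have "(scalar q + y) ^ j - scalar (q ^ j) \<in> aug_ideal p H H" for j
  proof (induction j)
    case 0
    then show ?case
      by (simp add: aug_ideal_0)
  next
    case (Suc j)
    have "(scalar q + y) ^ Suc j - scalar (q ^ Suc j)
        = scalar q * ((scalar q + y) ^ j - scalar (q ^ j)) + y * (scalar q + y) ^ j"
      by (simp add: algebra_simps flip: scalar_mult)
    also have "\<dots> \<in> aug_ideal p H H"
      using Suc assms(1,3) yH
      by (intro aug_ideal.add aug_ideal.mult_left aug_ideal.mult_right group_subring_power
          group_subring_add group_subring_scalar)
    finally show ?case .
  qed
  moreover obtain k where "q ^ k = 0"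
    using assms(2) unfolding is_nilpotent_def by blast
  ultimately have "(scalar q + y) ^ k \<in> aug_ideal p H H"
    by (metis diff_zero scalar_0)
  then obtain m where "((scalar q + y) ^ k) ^ m = 0"
    using nil unfolding is_nilpotent_def by blast
  then show ?thesis
    unfolding is_nilpotent_def by (metis power_mult)
qed

lemma GWNC_decompose_scalar_add:
  fixes y :: "'g::group_add \<Rightarrow>\<^sub>0 'a::ring_1"
  assumes "GWNC TYPE('a)" and "add_subgroup H" and "y \<in> aug_ideal p H H"
    and nil: "\<forall>x \<in> aug_ideal p H H. is_nilpotent (x :: 'g \<Rightarrow>\<^sub>0 'a)"
    and nonunit: "\<not> is_unit_ring (scalar r + y)"
  shows "\<exists>q e. is_nilpotent q \<and> is_idempotent e \<and> (scalar r + y = q + e \<or> scalar r + y = q - e)"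
proof -
  have "\<not> is_unit_ring r"
    using is_unit_ring_scalar_add[OF assms(2) _ assms(3) nil] nonunit by blast
  then obtain q e where "is_nilpotent q" "is_idempotent e" and qe: "r = q + e \<or> r = q - e"
    using assms(1) unfolding GWNC_def by blast
  then have "is_nilpotent (scalar q + y)" "is_idempotent (scalar e :: 'g \<Rightarrow>\<^sub>0 'a)"
    using is_nilpotent_scalar_add[OF assms(2) _ assms(3) nil] by (simp_all add: is_idempotent_def scalar_mult)
  moreover have "scalar r + y = (scalar q + y) + scalar e \<or> scalar r + y = (scalar q + y) - scalar e"
    using qe by (auto simp: scalar_add scalar_diff algebra_simps)
  ultimately show ?thesis
    by blast
qed

theorem lemma3p2:
  fixes p :: nat
  assumes "prime p"
    and "GWNC TYPE('a::ring_1)"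
    and "is_nilpotent (of_nat p :: 'a)"
    and "p_group p TYPE('g::group_add)"
    and "locally_finite_group TYPE('g)"
  shows "GWNC TYPE('g \<Rightarrow>\<^sub>0 'a)"
  unfolding GWNC_def
proof (intro allI impI)
  fix a :: "'g \<Rightarrow>\<^sub>0 'a"
  assume nonunit: "\<not> is_unit_ring a"
  define H where "H = gen_subgroup (Poly_Mapping.keys a)"
  have H: "add_subgroup H" and "finite H"
    using add_subgroup_gen_subgroup assms(5) unfolding H_def locally_finite_group_def by simp_all
  then obtain n where "card H = p ^ n"
    using card_add_subgroup_pgroup[OF assms(1)] p_group_gpow_eq_0[OF assms(1,4)] by blast
  then have nil: "\<forall>x \<in> aug_ideal p H H. is_nilpotent (x :: 'g \<Rightarrow>\<^sub>0 'a)"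
    using aug_ideal_is_nilpotent[OF assms(1) H _ assms(3)] by blast
  have "a \<in> group_subring H"
    unfolding group_subring_def H_def by (auto intro: gen_subgroup.gen)
  then have y: "a - scalar (augmentation a) \<in> aug_ideal p H H"
    by (rule diff_scalar_augmentation_mem_aug_ideal[OF H])
  show "\<exists>q e. is_nilpotent q \<and> is_idempotent e \<and> (a = q + e \<or> a = q - e)"
    using GWNC_decompose_scalar_add[OF assms(2) H y nil, of "augmentation a"] nonunit by simp
qed

end
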